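(* Let $f$, $u_{0s}$, $c_0$, $b_0$, $p$ be as in the context and assume $\|b_0\|_{L^1(-\infty,0)}<\infty$ and $\sup_{x\le0}|b_0(x)c_0(x)|<\infty$. Then there exists $\Lambda>0$ such that every $\sigma\in\mathbb{C}$ with $\Re(\sigma)>0$ and $\int_{-\infty}^{0}b_0(\xi)e^{-\sigma p(\xi)}\,d\xi=c_0(0)$ satisfies $|\Im(\sigma)|<\Lambda$.
   Context: Let $q>0$ and let $f:(-\infty,0]\times(0,\infty)\to[0,\infty)$ be such that for each $u>0$, $x\mapsto f(x,u)$ is continuous and integrable, $\partial f/\partial u$ exists and is continuous, and $\int_{-\infty}^0 f(x,u)\,dx=q/2$ independently of $u$. Let $u_{0s}=2\sqrt q$. Define $c_0(x)=\sqrt{2\int_{-\infty}^x f(y,u_{0s})\,dy}$ for $x\le0$ (so $c_0(0)=u_{0s}/2>0$), and assume $c_0(x)>0$ for all $x\le0$. Define $b_0(x)=\frac{\partial f}{\partial u}(x,u_{0s})+\frac{f(x,u_{0s})}{2c_0(x)}$ and $p(x)=\int_x^0 dy/c_0(y)$. *)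

theory Defs
  imports "HOL-Analysis.Analysis"
begin

definition u0s :: "real \<Rightarrow> real" where
  "u0s q = 2 * sqrt q"

definition c0 :: "(real \<Rightarrow> real \<Rightarrow> real) \<Rightarrow> real \<Rightarrow> real \<Rightarrow> real" where
  "c0 f q x = sqrt (2 * integral {..x} (\<lambda>y. f y (u0s q)))"

text \<open>b_0(x) = df/du(x,u_{0s}) + f(x,u_{0s}) / (2 c_0(x)), where fu is the partial derivative in u\<close>
definition b0 :: "(real \<Rightarrow> real \<Rightarrow> real) \<Rightarrow> (real \<Rightarrow> real \<Rightarrow> real) \<Rightarrow> real \<Rightarrow> real \<Rightarrow> real" where
  "b0 f fu q x = fu x (u0s q) + f x (u0s q) / (2 * c0 f q x)"

definition p :: "(real \<Rightarrow> real \<Rightarrow> real) \<Rightarrow> real \<Rightarrow> real \<Rightarrow> real" where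
  "p f q x = integral {x..0} (\<lambda>y. 1 / c0 f q y)"

end

theory Submission
  imports Defs
begin

text \<open>
  As \<open>p \<ge> 0\<close> and \<open>Re \<sigma> > 0\<close>, the factor \<open>e^{-\<sigma> p}\<close> has modulus at most 1, so since \<open>b0 \<in> L\<^sup>1\<close>
  the part of the integral beyond a point \<open>a\<close> far enough out is smaller than \<open>c0(0)/2\<close>.
  On \<open>[a, 0]\<close> write \<open>b0 = w r\<close> with \<open>w = b0 c0\<close> continuous and \<open>r = 1/c0 = -p'\<close>, and approximate
  \<open>w\<close> uniformly by a polynomial \<open>Q\<close>. Because \<open>(e^{-\<sigma> p})' = \<sigma> r e^{-\<sigma> p}\<close>, integration by parts
  makes the integral of \<open>Q r e^{-\<sigma> p}\<close> of order \<open>1/|\<sigma>|\<close>. So once \<open>|Im \<sigma>|\<close> is large the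
  whole integral has modulus below \<open>c0(0)\<close> and cannot equal \<open>c0(0)\<close>.
\<close>

lemma norm_of_real_mult_exp_le:
  fixes \<sigma> :: complex
  assumes "0 \<le> Re \<sigma> * t"
  shows "norm (complex_of_real a * exp (- \<sigma> * complex_of_real t)) \<le> \<bar>a\<bar>"
proof -
  have "norm (exp (- \<sigma> * complex_of_real t)) \<le> 1" using assms by simp
  then show ?thesis by (simp add: norm_mult mult_left_le)
qed

lemma has_vector_derivative_exp_neg_mult_of_real:
  fixes \<sigma> :: complex
  assumes "(P has_real_derivative P') (at x within S)"
  shows "((\<lambda>x. exp (- \<sigma> * complex_of_real (P x))) has_vector_derivative
           complex_of_real P' * (- \<sigma> * exp (- \<sigma> * complex_of_real (P x)))) (at x within S)"
proof -
  have P: "((\<lambda>x. complex_of_real (P x)) has_vector_derivative complex_of_real P') (at x within S)"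
    using assms by (intro has_vector_derivative_of_real) (simp add: has_real_derivative_iff_has_vector_derivative)
  have "((\<lambda>z. exp (- \<sigma> * z)) has_field_derivative - \<sigma> * exp (- \<sigma> * complex_of_real (P x)))
          (at (complex_of_real (P x)) within (\<lambda>x. complex_of_real (P x)) ` S)"
    by (auto intro!: derivative_eq_intros)
  from field_vector_diff_chain_within[OF P this] show ?thesis
    by (simp add: o_def)
qed

lemma norm_integral_of_real_mult_exp_le:
  fixes v P :: "real \<Rightarrow> real" and \<sigma> :: complex
  assumes "a \<le> b" "continuous_on {a..b} v" "continuous_on {a..b} P"
    and "\<And>x. x \<in> {a..b} \<Longrightarrow> \<bar>v x\<bar> \<le> V"
    and "\<And>x. x \<in> {a..b} \<Longrightarrow> 0 \<le> Re \<sigma> * P x"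
  shows "norm (integral {a..b} (\<lambda>x. complex_of_real (v x) * exp (- \<sigma> * complex_of_real (P x))))
           \<le> V * (b - a)"
proof (intro integral_bound continuous_intros assms)
  show "norm (complex_of_real (v x) * exp (- \<sigma> * complex_of_real (P x))) \<le> V" if "x \<in> {a..b}" for x
    using norm_of_real_mult_exp_le[OF assms(5)[OF that], of "v x"] assms(4)[OF that] by linarith
qed

lemma norm_mult_integral_by_parts_le:
  fixes Q Q' r P :: "real \<Rightarrow> real" and \<sigma> :: complex
  assumes ab: "a \<le> b"
    and Q: "\<And>x. x \<in> {a..b} \<Longrightarrow> (Q has_real_derivative Q' x) (at x within {a..b})"
    and Q': "continuous_on {a..b} Q'" "\<And>x. x \<in> {a..b} \<Longrightarrow> \<bar>Q' x\<bar> \<le> K"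
    and r: "continuous_on {a..b} r"
    and P: "\<And>x. x \<in> {a..b} \<Longrightarrow> (P has_real_derivative - r x) (at x within {a..b})"
    and decay: "\<And>x. x \<in> {a..b} \<Longrightarrow> 0 \<le> Re \<sigma> * P x"
  shows "norm (\<sigma> * integral {a..b} (\<lambda>x. complex_of_real (Q x * r x) * exp (- \<sigma> * complex_of_real (P x))))
           \<le> \<bar>Q a\<bar> + \<bar>Q b\<bar> + K * (b - a)"
proof -
  define e where "e = (\<lambda>x. exp (- \<sigma> * complex_of_real (P x)))"
  have e': "(e has_vector_derivative \<sigma> * complex_of_real (r x) * e x) (at x within {a..b})"
    if "x \<in> {a..b}" for x
    using has_vector_derivative_exp_neg_mult_of_real[OF P[OF that], of \<sigma>] unfolding e_def
    by (simp add: algebra_simps)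
  have Q'': "((\<lambda>x. complex_of_real (Q x)) has_vector_derivative complex_of_real (Q' x)) (at x within {a..b})"
    if "x \<in> {a..b}" for x
    using Q[OF that] by (intro has_vector_derivative_of_real) (simp add: has_real_derivative_iff_has_vector_derivative)
  have cont: "continuous_on {a..b} e" "continuous_on {a..b} Q"
    using continuous_on_vector_derivative[OF e'] DERIV_continuous_on[OF Q] by auto
  have FTC: "((\<lambda>x. \<sigma> * (complex_of_real (Q x * r x) * e x) + complex_of_real (Q' x) * e x)
          has_integral (complex_of_real (Q b) * e b - complex_of_real (Q a) * e a)) {a..b}"
    using fundamental_theorem_of_calculus[OF ab has_vector_derivative_mult[OF Q'' e']]
    by (simp add: algebra_simps)
  have int1: "(\<lambda>x. complex_of_real (Q x * r x) * e x) integrable_on {a..b}"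
    by (intro integrable_continuous_interval continuous_intros cont r)
  have int2: "(\<lambda>x. complex_of_real (Q' x) * e x) integrable_on {a..b}"
    by (intro integrable_continuous_interval continuous_intros cont Q')
  have parts: "\<sigma> * integral {a..b} (\<lambda>x. complex_of_real (Q x * r x) * e x)
      = complex_of_real (Q b) * e b - complex_of_real (Q a) * e a
        - integral {a..b} (\<lambda>x. complex_of_real (Q' x) * e x)"
    using integral_unique[OF FTC] integral_add[OF integrable_on_mult_right[OF int1] int2]
    by (simp add: algebra_simps)
  have bound: "norm (complex_of_real (h c) * e c) \<le> \<bar>h c\<bar>" if "c \<in> {a..b}" for h c
    unfolding e_def by (rule norm_of_real_mult_exp_le[OF decay[OF that]])
  have "norm (integral {a..b} (\<lambda>x. complex_of_real (Q' x) * e x)) \<le> K * (b - a)"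
    unfolding e_def using DERIV_continuous_on[OF P]
    by (intro norm_integral_of_real_mult_exp_le ab Q' decay)
  moreover have "norm (complex_of_real (Q b) * e b - complex_of_real (Q a) * e a)
      \<le> \<bar>Q a\<bar> + \<bar>Q b\<bar>"
    using norm_triangle_ineq4[of "complex_of_real (Q b) * e b" "complex_of_real (Q a) * e a"]
      bound[of a Q] bound[of b Q] ab
    by simp
  ultimately have "norm (\<sigma> * integral {a..b} (\<lambda>x. complex_of_real (Q x * r x) * e x))
      \<le> \<bar>Q a\<bar> + \<bar>Q b\<bar> + K * (b - a)"
    unfolding parts
    using norm_triangle_ineq4[of "complex_of_real (Q b) * e b - complex_of_real (Q a) * e a"
        "integral {a..b} (\<lambda>x. complex_of_real (Q' x) * e x)"]
    by linarith
  then show ?thesis by (simp add: e_def)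
qed

lemma continuous_bound_on_interval:
  fixes g :: "real \<Rightarrow> real"
  assumes "a \<le> b" "continuous_on {a..b} g"
  obtains G where "G > 0" "\<And>x. x \<in> {a..b} \<Longrightarrow> \<bar>g x\<bar> \<le> G"
proof -
  obtain x0 where "\<forall>x\<in>{a..b}. \<bar>g x\<bar> \<le> \<bar>g x0\<bar>"
    using continuous_attains_sup[OF compact_Icc _ continuous_on_rabs[OF assms(2)]] assms(1) by auto
  then have "\<bar>g x\<bar> \<le> \<bar>g x0\<bar> + 1" if "x \<in> {a..b}" for x
    using that by fastforce
  then show ?thesis by (intro that[of "\<bar>g x0\<bar> + 1"]) auto
qed

lemma polynomial_oscillatory_integral_eventually_small:
  fixes Q r P :: "real \<Rightarrow> real"
  assumes ab: "a \<le> b" and Q: "polynomial_function Q" and r: "continuous_on {a..b} r"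
    and P: "\<And>x. x \<in> {a..b} \<Longrightarrow> (P has_real_derivative - r x) (at x within {a..b})"
    and \<epsilon>: "\<epsilon> > 0"
  obtains \<Lambda> where "\<Lambda> > 0"
    "\<And>\<sigma>. (\<And>x. x \<in> {a..b} \<Longrightarrow> 0 \<le> Re \<sigma> * P x) \<Longrightarrow> \<Lambda> \<le> norm \<sigma> \<Longrightarrow>
       norm (integral {a..b} (\<lambda>x. complex_of_real (Q x * r x) * exp (- \<sigma> * complex_of_real (P x)))) < \<epsilon>"
proof -
  obtain Q' where Q': "polynomial_function Q'" "\<And>x. (Q has_vector_derivative Q' x) (at x)"
    using has_vector_derivative_polynomial_function[OF Q] by blast
  have Q'_cont: "continuous_on {a..b} Q'"
    using continuous_on_polymonial_function Q'(1) by blast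
  obtain K where K: "K > 0" "\<And>x. x \<in> {a..b} \<Longrightarrow> \<bar>Q' x\<bar> \<le> K"
    using continuous_bound_on_interval[OF ab Q'_cont] by blast
  define M where "M = \<bar>Q a\<bar> + \<bar>Q b\<bar> + K * (b - a)"
  have M: "M \<ge> 0" using K ab by (simp add: M_def)
  show ?thesis
  proof (rule that[of "M / \<epsilon> + 1"])
    show "M / \<epsilon> + 1 > 0" using M \<epsilon> by (simp add: add_nonneg_pos)
    fix \<sigma> :: complex
    assume decay: "\<And>x. x \<in> {a..b} \<Longrightarrow> 0 \<le> Re \<sigma> * P x" and large: "M / \<epsilon> + 1 \<le> norm \<sigma>"
    define J where
      "J = norm (integral {a..b} (\<lambda>x. complex_of_real (Q x * r x) * exp (- \<sigma> * complex_of_real (P x))))"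
    have by_parts: "norm \<sigma> * J \<le> M"
      using norm_mult_integral_by_parts_le[OF ab _ Q'_cont K(2) r P decay] Q'(2)
      unfolding M_def J_def norm_mult
      by (simp add: has_real_derivative_iff_has_vector_derivative has_vector_derivative_at_within)
    show "J < \<epsilon>" unfolding J_def[symmetric]
    proof (rule ccontr)
      assume "\<not> J < \<epsilon>"
      then have "(M / \<epsilon> + 1) * \<epsilon> \<le> norm \<sigma> * J"
        using large M \<epsilon> by (intro mult_mono) auto
      also have "(M / \<epsilon> + 1) * \<epsilon> = M + \<epsilon>" using \<epsilon> by (simp add: field_simps)
      finally show False using by_parts \<epsilon> by linarith
    qed
  qed
qed

lemma oscillatory_integral_eventually_small:
  fixes w r P :: "real \<Rightarrow> real"
  assumes ab: "a \<le> b" and w: "continuous_on {a..b} w" and r: "continuous_on {a..b} r"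
    and P: "\<And>x. x \<in> {a..b} \<Longrightarrow> (P has_real_derivative - r x) (at x within {a..b})"
    and \<epsilon>: "\<epsilon> > 0"
  obtains \<Lambda> where "\<Lambda> > 0"
    "\<And>\<sigma>. (\<And>x. x \<in> {a..b} \<Longrightarrow> 0 \<le> Re \<sigma> * P x) \<Longrightarrow> \<Lambda> \<le> norm \<sigma> \<Longrightarrow>
       norm (integral {a..b} (\<lambda>x. complex_of_real (w x * r x) * exp (- \<sigma> * complex_of_real (P x)))) < \<epsilon>"
proof -
  obtain R where R: "R > 0" "\<And>x. x \<in> {a..b} \<Longrightarrow> \<bar>r x\<bar> \<le> R"
    using continuous_bound_on_interval[OF ab r] by blast
  define \<eta> where "\<eta> = \<epsilon> / (2 * R * (b - a + 1))"
  have \<eta>: "\<eta> > 0" using \<epsilon> R ab by (simp add: \<eta>_def)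
  obtain Q where Q: "polynomial_function Q" "\<And>x. x \<in> {a..b} \<Longrightarrow> \<bar>w x - Q x\<bar> < \<eta>"
    using Stone_Weierstrass_polynomial_function[OF compact_Icc w \<eta>] by auto
  have Q_cont: "continuous_on {a..b} Q" using continuous_on_polymonial_function Q(1) by blast
  obtain \<Lambda> where \<Lambda>: "\<Lambda> > 0" and osc: "\<And>\<sigma>. (\<And>x. x \<in> {a..b} \<Longrightarrow> 0 \<le> Re \<sigma> * P x) \<Longrightarrow>
      \<Lambda> \<le> norm \<sigma> \<Longrightarrow> norm (integral {a..b} (\<lambda>x. complex_of_real (Q x * r x)
        * exp (- \<sigma> * complex_of_real (P x)))) < \<epsilon> / 2"
    using polynomial_oscillatory_integral_eventually_small[OF ab Q(1) r P, of "\<epsilon> / 2"] \<epsilon> by auto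
  show ?thesis
  proof (rule that[OF \<Lambda>])
    fix \<sigma> :: complex
    assume decay: "\<And>x. x \<in> {a..b} \<Longrightarrow> 0 \<le> Re \<sigma> * P x" and large: "\<Lambda> \<le> norm \<sigma>"
    define e where "e = (\<lambda>x. exp (- \<sigma> * complex_of_real (P x)))"
    have P_cont: "continuous_on {a..b} P" using DERIV_continuous_on[OF P] .
    have "norm (integral {a..b} (\<lambda>x. complex_of_real ((w x - Q x) * r x) * e x)) \<le> \<eta> * R * (b - a)"
      unfolding e_def
    proof (intro norm_integral_of_real_mult_exp_le ab decay P_cont)
      show "continuous_on {a..b} (\<lambda>x. (w x - Q x) * r x)"
        by (intro continuous_intros w r Q_cont)
      show "\<bar>(w x - Q x) * r x\<bar> \<le> \<eta> * R" if "x \<in> {a..b}" for x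
        using Q(2)[OF that] R(2)[OF that] unfolding abs_mult by (intro mult_mono) auto
    qed
    also have "\<eta> * R * (b - a) = \<epsilon> / 2 * ((b - a) / (b - a + 1))"
      using R(1) ab unfolding \<eta>_def by (simp add: divide_simps)
    also have "\<dots> < \<epsilon> / 2"
      using \<epsilon> ab by (simp add: divide_simps)
    finally have approx: "norm (integral {a..b} (\<lambda>x. complex_of_real ((w x - Q x) * r x) * e x)) < \<epsilon> / 2" .
    have osc_bound: "norm (integral {a..b} (\<lambda>x. complex_of_real (Q x * r x) * e x)) < \<epsilon> / 2"
      unfolding e_def using osc[of \<sigma>] decay large by blast
    have e_cont: "continuous_on {a..b} e"
      unfolding e_def by (intro continuous_intros P_cont)
    have split: "integral {a..b} (\<lambda>x. complex_of_real (w x * r x) * e x)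
        = integral {a..b} (\<lambda>x. complex_of_real ((w x - Q x) * r x) * e x)
          + integral {a..b} (\<lambda>x. complex_of_real (Q x * r x) * e x)"
      by (subst integral_add[symmetric])
        (auto intro!: integrable_continuous_interval continuous_intros w r Q_cont e_cont
          integral_cong simp: algebra_simps)
    have "norm (integral {a..b} (\<lambda>x. complex_of_real (w x * r x) * e x)) < \<epsilon>"
      using approx osc_bound norm_triangle_ineq[of "integral {a..b} (\<lambda>x. complex_of_real ((w x - Q x) * r x) * e x)"
          "integral {a..b} (\<lambda>x. complex_of_real (Q x * r x) * e x)"]
      unfolding split by linarith
    then show "norm (integral {a..b} (\<lambda>x. complex_of_real (w x * r x)
        * exp (- \<sigma> * complex_of_real (P x)))) < \<epsilon>"
      by (simp add: e_def)
  qed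
qed

lemma integral_atMost_split:
  fixes f :: "real \<Rightarrow> 'b::euclidean_space"
  assumes f: "f absolutely_integrable_on {..b}" and "a \<le> x" "x \<le> b"
  shows "integral {..x} f = integral {..a} f + integral {a..x} f"
proof -
  have "f absolutely_integrable_on {..a}" "f absolutely_integrable_on {a..x}"
    using assms(2,3) by (auto intro: set_integrable_subset[OF f])
  then have "f integrable_on {..a}" "f integrable_on {a..x}"
    by (simp_all add: absolutely_integrable_on_def)
  then have "(f has_integral (integral {..a} f + integral {a..x} f)) ({..a} \<union> {a..x})"
    by (intro has_integral_Un integrable_integral) (auto intro: negligible_subset[of "{a}"])
  moreover have "{..a} \<union> {a..x} = {..x}" using assms(2) by auto
  ultimately show ?thesis by (simp add: integral_unique)
qed

lemma continuous_on_integral_atMost: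
  fixes f :: "real \<Rightarrow> 'b::euclidean_space"
  assumes f: "f absolutely_integrable_on {..b}" and "a \<le> b"
  shows "continuous_on {a..b} (\<lambda>x. integral {..x} f)"
proof -
  have "f absolutely_integrable_on {a..b}" by (auto intro: set_integrable_subset[OF f])
  then have "f integrable_on {a..b}" by (simp add: absolutely_integrable_on_def)
  then have "continuous_on {a..b} (\<lambda>x. integral {..a} f + integral {a..x} f)"
    by (intro continuous_intros indefinite_integral_continuous_1)
  then show ?thesis
    by (rule continuous_on_eq) (use integral_atMost_split[OF f] in auto)
qed

lemma absolutely_integrable_tail_small:
  fixes h :: "real \<Rightarrow> 'b::euclidean_space"
  assumes h: "h absolutely_integrable_on {..b}" and e: "e > 0"
  obtains a where "a \<le> b" "integral {..a} (\<lambda>x. norm (h x)) < e"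
proof -
  define g where "g x = norm (h x)" for x
  have g_int: "g integrable_on {..s}" if "s \<le> b" for s
    using set_integrable_subset[OF h, of "{..s}"] that unfolding absolutely_integrable_on_def g_def by auto
  define F where "F k x = (if x \<in> {..b - real k} then g x else 0)" for k :: nat and x
  have "F k integrable_on {..b}" "integral {..b} (F k) = integral {..b - real k} g" for k
    using g_int[of "b - real k"] unfolding F_def integrable_restrict_Int integral_restrict_Int
    by (simp_all add: Int_absorb2)
  moreover have "(\<lambda>k. F k x) \<longlonglongrightarrow> 0" for x
  proof -
    obtain N :: nat where "real N > b - x" using reals_Archimedean2 by blast
    then have "eventually (\<lambda>k. F k x = 0) sequentially"
      unfolding F_def eventually_sequentially by (intro exI[of _ N]) auto
    then show ?thesis by (rule tendsto_eventually)
  qed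
  moreover have "norm (F k x) \<le> g x" for k x by (simp add: F_def g_def)
  ultimately have "(\<lambda>k. integral {..b - real k} g) \<longlonglongrightarrow> 0"
    using dominated_convergence(2)[of F "{..b}" g "\<lambda>x. 0"] g_int[of b] by simp
  then have "eventually (\<lambda>k. integral {..b - real k} g < e) sequentially"
    using e by (rule order_tendstoD(2))
  then obtain k where "integral {..b - real k} g < e"
    unfolding eventually_sequentially by blast
  then show ?thesis by (intro that[of "b - real k"]) (simp_all add: g_def[abs_def])
qed

lemma norm_integral_atMost_le_tail:
  fixes h :: "real \<Rightarrow> 'b::euclidean_space" and g :: "real \<Rightarrow> real"
  assumes h: "h integrable_on {..b}" and g: "g absolutely_integrable_on {..b}"
    and le: "\<And>x. x \<le> b \<Longrightarrow> norm (h x) \<le> norm (g x)" and "a \<le> b"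
  shows "norm (integral {..b} h) \<le> integral {..a} (\<lambda>x. norm (g x)) + norm (integral {a..b} h)"
proof -
  have h_abs: "h absolutely_integrable_on {..b}"
    using g le by (intro absolutely_integrable_integrable_bound[OF _ h, of "\<lambda>x. norm (g x)"])
      (auto simp: absolutely_integrable_on_def)
  have "h absolutely_integrable_on {..a}" "g absolutely_integrable_on {..a}"
    using set_integrable_subset[OF h_abs] set_integrable_subset[OF g] \<open>a \<le> b\<close> by auto
  then have "norm (integral {..a} h) \<le> integral {..a} (\<lambda>x. norm (g x))"
    using le \<open>a \<le> b\<close> by (intro integral_norm_bound_integral) (auto simp: absolutely_integrable_on_def)
  moreover have "norm (integral {..b} h) \<le> norm (integral {..a} h) + norm (integral {a..b} h)"
    unfolding integral_atMost_split[OF h_abs \<open>a \<le> b\<close> order_refl] by (rule norm_triangle_ineq)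
  ultimately show ?thesis by linarith
qed

lemma oscillatory_integral_atMost_eventually_small:
  fixes B w r P :: "real \<Rightarrow> real"
  assumes B: "B absolutely_integrable_on {..b}" "\<And>x. x \<le> b \<Longrightarrow> B x = w x * r x"
    and w: "\<And>a. a \<le> b \<Longrightarrow> continuous_on {a..b} w" and r: "\<And>a. a \<le> b \<Longrightarrow> continuous_on {a..b} r"
    and P: "\<And>a x. x \<in> {a..b} \<Longrightarrow> (P has_real_derivative - r x) (at x within {a..b})"
    and \<epsilon>: "\<epsilon> > 0"
  obtains \<Lambda> where "\<Lambda> > 0"
    "\<And>\<sigma>. (\<And>x. x \<le> b \<Longrightarrow> 0 \<le> Re \<sigma> * P x) \<Longrightarrow> \<Lambda> \<le> norm \<sigma> \<Longrightarrow>
       norm (integral {..b} (\<lambda>x. complex_of_real (B x) * exp (- \<sigma> * complex_of_real (P x)))) < \<epsilon>"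
proof -
  obtain a where a: "a \<le> b" "integral {..a} (\<lambda>x. norm (B x)) < \<epsilon> / 2"
    using absolutely_integrable_tail_small[OF B(1), of "\<epsilon> / 2"] \<epsilon> by auto
  obtain \<Lambda> where \<Lambda>: "\<Lambda> > 0" and osc: "\<And>\<sigma>. (\<And>x. x \<in> {a..b} \<Longrightarrow> 0 \<le> Re \<sigma> * P x) \<Longrightarrow>
      \<Lambda> \<le> norm \<sigma> \<Longrightarrow> norm (integral {a..b} (\<lambda>x. complex_of_real (w x * r x)
        * exp (- \<sigma> * complex_of_real (P x)))) < \<epsilon> / 2"
    using oscillatory_integral_eventually_small[OF a(1) w[OF a(1)] r[OF a(1)] P, of "\<epsilon> / 2"] \<epsilon>
    by auto
  show ?thesis
  proof (rule that[OF \<Lambda>])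
    fix \<sigma> :: complex
    assume decay: "\<And>x. x \<le> b \<Longrightarrow> 0 \<le> Re \<sigma> * P x" and large: "\<Lambda> \<le> norm \<sigma>"
    define h where "h = (\<lambda>x. complex_of_real (B x) * exp (- \<sigma> * complex_of_real (P x)))"
    have "integral {a..b} h = integral {a..b} (\<lambda>x. complex_of_real (w x * r x)
        * exp (- \<sigma> * complex_of_real (P x)))"
      unfolding h_def by (rule integral_cong) (simp add: B(2))
    then have compact: "norm (integral {a..b} h) < \<epsilon> / 2"
      using osc[OF _ large] decay by simp
    show "norm (integral {..b} h) < \<epsilon>" unfolding h_def[symmetric]
    proof (cases "h integrable_on {..b}")
      case True
      have "norm (h x) \<le> norm (B x)" if "x \<le> b" for x
        unfolding h_def using norm_of_real_mult_exp_le[OF decay[OF that]] by simp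
      with norm_integral_atMost_le_tail[OF True B(1) _ a(1)] a(2) compact show ?thesis by fastforce
    next
      case False
      \<comment> \<open>the integral then takes the junk value 0\<close>
      then show ?thesis using \<epsilon> by (simp add: not_integrable_integral)
    qed
  qed
qed

lemma c0_continuous_on:
  assumes "(\<lambda>y. f y (u0s q)) absolutely_integrable_on {..0}" "a \<le> 0"
  shows "continuous_on {a..0} (c0 f q)"
  unfolding c0_def[abs_def]
  by (intro continuous_intros continuous_on_integral_atMost[OF assms])

lemma b0_continuous_on:
  assumes "continuous_on {..0} (\<lambda>x. f x (u0s q))" "continuous_on {..0} (\<lambda>x. fu x (u0s q))"
    and "continuous_on {a..0} (c0 f q)" "\<And>x. x \<in> {a..0} \<Longrightarrow> c0 f q x > 0"
  shows "continuous_on {a..0} (b0 f fu q)"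
proof -
  have "{a..0} \<subseteq> {..0::real}" by auto
  with assms show ?thesis
    unfolding b0_def[abs_def]
    by (intro continuous_intros) (auto intro: continuous_on_subset simp: less_imp_neq[symmetric])
qed

lemma p_has_real_derivative:
  assumes "continuous_on {a..0} (c0 f q)" "\<And>x. x \<in> {a..0} \<Longrightarrow> c0 f q x > 0" "x \<in> {a..0}"
  shows "(p f q has_real_derivative - (1 / c0 f q x)) (at x within {a..0})"
  unfolding p_def[abs_def] using assms
  by (intro integral_has_real_derivative' continuous_intros) (auto simp: less_imp_neq[symmetric])

lemma p_nonneg:
  assumes "\<And>y. y \<in> {x..0} \<Longrightarrow> c0 f q y > 0"
  shows "p f q x \<ge> 0"
proof (cases "(\<lambda>y. 1 / c0 f q y) integrable_on {x..0}")
  case True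
  then show ?thesis unfolding p_def using assms by (intro integral_nonneg) (auto intro: less_imp_le)
next
  case False
  then show ?thesis by (simp add: p_def not_integrable_integral)
qed

theorem theorem3:
  fixes f fu :: "real \<Rightarrow> real \<Rightarrow> real" and q :: real
  assumes q_pos: "q > 0"
    and f_nonneg: "\<And>x u. x \<le> 0 \<Longrightarrow> u > 0 \<Longrightarrow> f x u \<ge> 0"
    and f_cont: "\<And>u. u > 0 \<Longrightarrow> continuous_on {..0} (\<lambda>x. f x u)"
    and f_int: "\<And>u. u > 0 \<Longrightarrow> (\<lambda>x. f x u) integrable_on {..0}"
    and f_deriv: "\<And>x u. x \<le> 0 \<Longrightarrow> u > 0 \<Longrightarrow> ((\<lambda>v. f x v) has_real_derivative fu x u) (at u)"
    and fu_cont: "\<And>u. u > 0 \<Longrightarrow> continuous_on {..0} (\<lambda>x. fu x u)"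
    and f_mass: "\<And>u. u > 0 \<Longrightarrow> integral {..0} (\<lambda>x. f x u) = q / 2"
    and c0_pos: "\<And>x. x \<le> 0 \<Longrightarrow> c0 f q x > 0"
    and b0_L1: "b0 f fu q absolutely_integrable_on {..0}"
    and b0c0_bdd: "\<exists>M. \<forall>x\<le>0. \<bar>b0 f fu q x * c0 f q x\<bar> \<le> M"
  shows "\<exists>\<Lambda>>0. \<forall>\<sigma>::complex. Re \<sigma> > 0 \<and>
           integral {..0} (\<lambda>\<xi>. complex_of_real (b0 f fu q \<xi>) * exp (- \<sigma> * complex_of_real (p f q \<xi>)))
             = complex_of_real (c0 f q 0)
           \<longrightarrow> \<bar>Im \<sigma>\<bar> < \<Lambda>"
proof -
  have u0: "u0s q > 0" using q_pos by (simp add: u0s_def)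
  have f_abs: "(\<lambda>x. f x (u0s q)) absolutely_integrable_on {..0}"
    using f_int[OF u0] f_nonneg[OF _ u0] by (rule nonnegative_absolutely_integrable_1) simp
  have c0_cont: "continuous_on {a..0} (c0 f q)" if "a \<le> 0" for a
    using f_abs that by (rule c0_continuous_on[of f q])
  have c0_pos_on: "c0 f q x > 0" if "x \<in> {a..0}" for a x using c0_pos that by simp
  obtain \<Lambda> where \<Lambda>: "\<Lambda> > 0" and small: "\<And>\<sigma>. (\<And>x. x \<le> 0 \<Longrightarrow> 0 \<le> Re \<sigma> * p f q x) \<Longrightarrow>
      \<Lambda> \<le> norm \<sigma> \<Longrightarrow> norm (integral {..0} (\<lambda>x. complex_of_real (b0 f fu q x)
        * exp (- \<sigma> * complex_of_real (p f q x)))) < c0 f q 0"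
  proof (rule oscillatory_integral_atMost_eventually_small
      [where B = "b0 f fu q" and b = 0 and w = "\<lambda>x. b0 f fu q x * c0 f q x"
        and r = "\<lambda>x. 1 / c0 f q x" and P = "p f q" and \<epsilon> = "c0 f q 0"])
    show "b0 f fu q x = b0 f fu q x * c0 f q x * (1 / c0 f q x)" if "x \<le> 0" for x
      using c0_pos[OF that] by simp
    show "continuous_on {a..0} (\<lambda>x. b0 f fu q x * c0 f q x)" if "a \<le> 0" for a
      using b0_continuous_on[where f = f and fu = fu and q = q,
          OF f_cont[OF u0] fu_cont[OF u0] c0_cont[OF that] c0_pos_on[where a = a]] c0_cont[OF that]
      by (intro continuous_intros)
    show "continuous_on {a..0} (\<lambda>x. 1 / c0 f q x)" if "a \<le> 0" for a
      using c0_cont[OF that] c0_pos_on[where a = a] by (intro continuous_intros) (auto simp: less_imp_neq[symmetric])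
    show "(p f q has_real_derivative - (1 / c0 f q x)) (at x within {a..0})" if "x \<in> {a..0}" for a x
      using c0_cont c0_pos_on that by (intro p_has_real_derivative) auto
  qed (use b0_L1 c0_pos in auto)
  show ?thesis
  proof (intro exI[of _ \<Lambda>] conjI allI impI \<Lambda>)
    fix \<sigma> :: complex
    assume \<sigma>: "Re \<sigma> > 0 \<and> integral {..0} (\<lambda>\<xi>. complex_of_real (b0 f fu q \<xi>)
        * exp (- \<sigma> * complex_of_real (p f q \<xi>))) = complex_of_real (c0 f q 0)"
    have "0 \<le> Re \<sigma> * p f q x" if "x \<le> 0" for x
      using \<sigma> p_nonneg[of x f q] c0_pos that by simp
    with \<sigma> small[of \<sigma>] c0_pos[of 0] have "\<not> \<Lambda> \<le> norm \<sigma>" by auto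
    with abs_Im_le_cmod[of \<sigma>] show "\<bar>Im \<sigma>\<bar> < \<Lambda>" by linarith
  qed
qed

end
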